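(* Let $n\ge 3$. The maps $A,B,C,D,E$ defined below are injective, their images are faces of $\Delta_{n+1}$, and the set of faces of $\Delta_{n+1}$ is the disjoint union of the images of $A$, $B$, $C$, $D$, $E$. Moreover, for each fixed $i\in\{2,\dots,n\}$, the image $\{E(F,i):F\in\Delta_n\}$ equals the set of faces of $\Delta_{n+1}$ containing the vertex $\{i,n+1\}$, it is isomorphic as a poset (under inclusion) to the face poset of $\Delta_n$, and it is an upper order ideal in the face poset of $\Delta_{n+1}$.
   Context: The Whitehouse complex $\Delta_n$ ($n\ge 3$) is the simplicial complex with vertex set $V_n=\{S\subseteq\{2,\dots,n\}: 2\le |S|\le n-2\}$, in which a subset $F\subseteq V_n$ is a face iff for all $S,T\in F$ one has $S\subseteq T$, $T\subseteq S$, or $S\cap T=\emptyset$. (So $\Delta_3=\{\emptyset\}$.) Its face poset is the set of its faces (including $\emptyset$) ordered by inclusion. For a face $F$ of $\Delta_n$ define: $A(F)=F$; $B(F)=F\cup\{\{2,\dots,n\}\}$; for $S\in F$, $C(F,S)=\{T\cup\{n+1\}: T\in F, S\subseteq T\}\cup\{T: T\in F, S\not\subseteq T\}$ and $D(F,S)=C(F,S)\cup\{S\}$; for $2\le i\le n$, $E(F,i)=\{\{i,n+1\}\}\cup\{T\cup\{n+1\}: T\in F, i\in T\}\cup\{T: T\in F, i\notin T\}$. Here $A,B$ have domain the faces of $\Delta_n$, $C,D$ have domain the pairs $(F,S)$ with $F$ a face and $S\in F$, and $E$ has domain the pairs $(F,i)$ with $F$ a face and $2\le i\le n$. *)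

theory Defs
  imports Main
begin

definition wh_vertices :: "nat \<Rightarrow> nat set set" where
  "wh_vertices n = {S. S \<subseteq> {2..n} \<and> 2 \<le> card S \<and> card S \<le> n - 2}"

definition wh_compatible :: "nat set \<Rightarrow> nat set \<Rightarrow> bool" where
  "wh_compatible S T \<longleftrightarrow> S \<subseteq> T \<or> T \<subseteq> S \<or> S \<inter> T = {}"

definition wh_faces :: "nat \<Rightarrow> nat set set set" where
  "wh_faces n = {F. F \<subseteq> wh_vertices n \<and> (\<forall>S\<in>F. \<forall>T\<in>F. wh_compatible S T)}"

definition mapA :: "nat set set \<Rightarrow> nat set set" where
  "mapA F = F"

definition mapB :: "nat \<Rightarrow> nat set set \<Rightarrow> nat set set" where
  "mapB n F = insert {2..n} F"

definition mapC :: "nat \<Rightarrow> nat set set \<Rightarrow> nat set \<Rightarrow> nat set set" where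
  "mapC n F S = {insert (n+1) T | T. T \<in> F \<and> S \<subseteq> T} \<union> {T. T \<in> F \<and> \<not> S \<subseteq> T}"

definition mapD :: "nat \<Rightarrow> nat set set \<Rightarrow> nat set \<Rightarrow> nat set set" where
  "mapD n F S = insert S (mapC n F S)"

definition mapE :: "nat \<Rightarrow> nat set set \<Rightarrow> nat \<Rightarrow> nat set set" where
  "mapE n F i = {{i, n+1}} \<union> {insert (n+1) T | T. T \<in> F \<and> i \<in> T} \<union> {T. T \<in> F \<and> i \<notin> T}"

definition domCD :: "nat \<Rightarrow> (nat set set \<times> nat set) set" where
  "domCD n = {(F, S). F \<in> wh_faces n \<and> S \<in> F}"

definition domE :: "nat \<Rightarrow> (nat set set \<times> nat) set" where
  "domE n = {(F, i). F \<in> wh_faces n \<and> i \<in> {2..n}}"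

definition imA :: "nat \<Rightarrow> nat set set set" where
  "imA n = mapA ` wh_faces n"

definition imB :: "nat \<Rightarrow> nat set set set" where
  "imB n = mapB n ` wh_faces n"

definition imC :: "nat \<Rightarrow> nat set set set" where
  "imC n = (\<lambda>(F, S). mapC n F S) ` domCD n"

definition imD :: "nat \<Rightarrow> nat set set set" where
  "imD n = (\<lambda>(F, S). mapD n F S) ` domCD n"

definition imE :: "nat \<Rightarrow> nat set set set" where
  "imE n = (\<lambda>(F, i). mapE n F i) ` domE n"

end

theory Submission
  imports Defs
begin

text \<open>
  Write a = n+1 and let lift a S map a set T to insert a T if S \<subseteq> T and to T otherwise.
  Then C(F,S) is the image of F under lift a S, and B(F), D(F,S), E(F,i) add one further vertex,
  namely {2..n}, S and {i,a}, to A(F), C(F,S) and C(F,{i}). The vertices of a face that contain a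
  meet pairwise, hence form a chain; its least element, the apex, is insert a S for C(F,S) and
  D(F,S) and {i,a} for E(F,i). So the apex recovers S or i, and deleting a from the remaining
  vertices recovers F, which gives injectivity and disjointness. Conversely, a face of
  \<Delta>(n+1) with no vertex containing a comes from A or B; otherwise its apex M shows where it
  comes from: from E if M has two elements, else from D or C according to whether M - {a} is a
  vertex of the face.
\<close>

section \<open>Lifting sets along a new point\<close>

definition lift :: "'a \<Rightarrow> 'a set \<Rightarrow> 'a set \<Rightarrow> 'a set" where
  "lift a S T = (if S \<subseteq> T then insert a T else T)"

lemma lift_Diff: "a \<notin> T \<Longrightarrow> lift a S T - {a} = T"
  by (auto simp: lift_def)

lemma inj_on_lift: "inj_on (lift a S) {T. a \<notin> T}"
  by (rule inj_on_inverseI[where g = "\<lambda>Y. Y - {a}"]) (simp add: lift_Diff)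

lemma insert_in_lift_image_iff:
  assumes "a \<notin> T" "\<forall>U\<in>F. a \<notin> U"
  shows "insert a T \<in> lift a S ` F \<longleftrightarrow> S \<subseteq> T \<and> T \<in> F"
proof
  assume "insert a T \<in> lift a S ` F"
  then obtain U where U: "U \<in> F" "insert a T = lift a S U" by blast
  with assms have "S \<subseteq> U"
    unfolding lift_def by (metis insertI1)
  with U assms show "S \<subseteq> T \<and> T \<in> F"
    unfolding lift_def by (metis insert_ident)
next
  assume "S \<subseteq> T \<and> T \<in> F"
  then show "insert a T \<in> lift a S ` F"
    unfolding lift_def by force
qed

lemma notin_lift_image: "a \<notin> S \<Longrightarrow> S \<notin> lift a S ` F"
  by (auto simp: lift_def)

lemma wh_compatible_sym: "wh_compatible S T = wh_compatible T S"
  by (auto simp: wh_compatible_def)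

lemma wh_compatible_Diff: "wh_compatible S T \<Longrightarrow> wh_compatible (S - A) (T - A)"
  by (auto simp: wh_compatible_def)

lemma wh_compatible_lift:
  "S \<noteq> {} \<Longrightarrow> a \<notin> T \<Longrightarrow> a \<notin> U \<Longrightarrow> wh_compatible T U \<Longrightarrow> wh_compatible (lift a S T) (lift a S U)"
  unfolding wh_compatible_def lift_def by auto

lemma wh_compatible_lift_self: "wh_compatible S T \<Longrightarrow> wh_compatible S (lift a S T)"
  unfolding wh_compatible_def lift_def by auto

lemma mapC_eq_lift_image: "mapC n F S = lift (n+1) S ` F"
  by (auto simp: mapC_def lift_def)

lemma mapE_eq_insert_mapC: "mapE n F i = insert {i, n+1} (mapC n F {i})"
  by (auto simp: mapE_def mapC_def)

section \<open>Vertices and faces of consecutive Whitehouse complexes\<close>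

lemma wh_verticesD:
  assumes "T \<in> wh_vertices n"
  shows "T \<subseteq> {2..n}" "finite T" "2 \<le> card T" "card T \<le> n - 2"
  using assms finite_subset[of T "{2..n}"] by (auto simp: wh_vertices_def)

lemma wh_facesD:
  assumes "F \<in> wh_faces n"
  shows "T \<in> F \<Longrightarrow> T \<in> wh_vertices n" "T \<in> F \<Longrightarrow> U \<in> F \<Longrightarrow> wh_compatible T U"
  using assms by (auto simp: wh_faces_def)

lemma wh_vertices_nonempty: "T \<in> wh_vertices n \<Longrightarrow> T \<noteq> {}"
  using wh_verticesD(3) by fastforce

lemma Suc_notin_face_vertex: "F \<in> wh_faces n \<Longrightarrow> T \<in> F \<Longrightarrow> n+1 \<notin> T"
  using wh_facesD(1) wh_verticesD(1) by fastforce

lemma insert_in_wh_faces_iff: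
  "insert X G \<in> wh_faces m \<longleftrightarrow> G \<in> wh_faces m \<and> X \<in> wh_vertices m \<and> (\<forall>Y\<in>G. wh_compatible X Y)"
proof -
  have "wh_compatible X X"
    by (simp add: wh_compatible_def)
  then show ?thesis
    using wh_compatible_sym[of X] unfolding wh_faces_def by blast
qed

lemma interval_notin_wh_vertices: "{2..n} \<notin> wh_vertices n"
  by (auto simp: wh_vertices_def)

lemma interval_in_wh_vertices_Suc: "3 \<le> n \<Longrightarrow> {2..n} \<in> wh_vertices (n+1)"
  by (auto simp: wh_vertices_def)

lemma edge_in_wh_vertices_Suc: "{i, n+1} \<in> wh_vertices (n+1) \<Longrightarrow> i \<in> {2..n}"
  by (cases "i = n+1") (auto simp: wh_vertices_def)

lemma wh_vertices_subset_Suc: "wh_vertices n \<subseteq> wh_vertices (n+1)"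
  by (auto simp: wh_vertices_def)

lemma wh_faces_subset_Suc: "wh_faces n \<subseteq> wh_faces (n+1)"
  using wh_vertices_subset_Suc by (auto simp: wh_faces_def)

lemma lift_in_wh_vertices_Suc:
  assumes "T \<in> wh_vertices n"
  shows "lift (n+1) S T \<in> wh_vertices (n+1)"
proof -
  have "n+1 \<notin> T"
    using wh_verticesD(1)[OF assms] by auto
  then show ?thesis
    using wh_verticesD[OF assms] by (auto simp: lift_def wh_vertices_def)
qed

lemma wh_vertices_Suc_avoiding:
  assumes Y: "Y \<in> wh_vertices (n+1)" and "n+1 \<notin> Y" "Y \<noteq> {2..n}"
  shows "Y \<in> wh_vertices n"
proof -
  have "Y \<subset> {2..n}"
    using wh_verticesD(1)[OF Y] assms(2,3) by (auto simp: le_Suc_eq)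
  then have "card Y < n - 1"
    using psubset_card_mono[of "{2..n}" Y] by simp
  then show ?thesis
    using \<open>Y \<subset> {2..n}\<close> wh_verticesD(3)[OF Y] by (auto simp: wh_vertices_def)
qed

lemma wh_vertices_Suc_Diff:
  assumes Y: "Y \<in> wh_vertices (n+1)" and "n+1 \<in> Y" "2 \<le> card (Y - {n+1})"
  shows "Y - {n+1} \<in> wh_vertices n"
  using wh_verticesD[OF Y] assms(2,3) by (auto simp: wh_vertices_def le_Suc_eq)

lemma two_le_card_Diff_Suc:
  assumes "Y \<in> wh_vertices (n+1)" "n+1 \<in> Y \<Longrightarrow> 3 \<le> card Y"
  shows "2 \<le> card (Y - {n+1})"
  using wh_verticesD(2,3)[OF assms(1)] assms(2) by (cases "n+1 \<in> Y") auto

lemma mapC_in_wh_faces: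
  assumes F: "F \<in> wh_faces n" and "S \<noteq> {}"
  shows "mapC n F S \<in> wh_faces (n+1)"
proof -
  have "lift (n+1) S T \<in> wh_vertices (n+1)" if "T \<in> F" for T
    using lift_in_wh_vertices_Suc wh_facesD(1)[OF F that] .
  moreover have "wh_compatible (lift (n+1) S T) (lift (n+1) S U)" if "T \<in> F" "U \<in> F" for T U
    using wh_compatible_lift[OF assms(2) Suc_notin_face_vertex[OF F that(1)]
        Suc_notin_face_vertex[OF F that(2)] wh_facesD(2)[OF F that]] .
  ultimately show ?thesis
    unfolding mapC_eq_lift_image wh_faces_def by blast
qed

lemma mapD_in_wh_faces:
  assumes F: "F \<in> wh_faces n" and S: "S \<in> F"
  shows "mapD n F S \<in> wh_faces (n+1)"
proof -
  have "mapC n F S \<in> wh_faces (n+1)"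
    using mapC_in_wh_faces[OF F wh_vertices_nonempty[OF wh_facesD(1)[OF F S]]] .
  moreover have "S \<in> wh_vertices (n+1)"
    using wh_vertices_subset_Suc wh_facesD(1)[OF F S] by blast
  moreover have "\<forall>Y\<in>mapC n F S. wh_compatible S Y"
    using wh_compatible_lift_self wh_facesD(2)[OF F S] unfolding mapC_eq_lift_image by blast
  ultimately show ?thesis
    unfolding mapD_def insert_in_wh_faces_iff by blast
qed

lemma mapE_in_wh_faces:
  assumes "3 \<le> n" and F: "F \<in> wh_faces n" and i: "i \<in> {2..n}"
  shows "mapE n F i \<in> wh_faces (n+1)"
proof -
  have "mapC n F {i} \<in> wh_faces (n+1)"
    using mapC_in_wh_faces[OF F] by blast
  moreover have "{i, n+1} \<in> wh_vertices (n+1)"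
    using assms(1) i by (auto simp: wh_vertices_def)
  moreover have "\<forall>Y\<in>mapC n F {i}. wh_compatible {i, n+1} Y"
    using Suc_notin_face_vertex[OF F]
    unfolding mapC_eq_lift_image by (auto simp: wh_compatible_def lift_def)
  ultimately show ?thesis
    unfolding mapE_eq_insert_mapC insert_in_wh_faces_iff by blast
qed

lemma mapB_in_wh_faces:
  assumes "3 \<le> n" and F: "F \<in> wh_faces n"
  shows "mapB n F \<in> wh_faces (n+1)"
proof -
  have "\<forall>Y\<in>F. wh_compatible {2..n} Y"
    using wh_verticesD(1) wh_facesD(1)[OF F] by (auto simp: wh_compatible_def)
  then show ?thesis
    unfolding mapB_def insert_in_wh_faces_iff
    using F wh_faces_subset_Suc interval_in_wh_vertices_Suc[OF assms(1)] by blast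
qed

lemma imA_eq: "imA n = wh_faces n"
  by (simp add: imA_def mapA_def)

lemma imC_iff: "G \<in> imC n \<longleftrightarrow> (\<exists>F\<in>wh_faces n. \<exists>S\<in>F. G = mapC n F S)"
  by (auto simp: imC_def domCD_def)

lemma imD_iff: "G \<in> imD n \<longleftrightarrow> (\<exists>F\<in>wh_faces n. \<exists>S\<in>F. G = mapD n F S)"
  by (auto simp: imD_def domCD_def)

lemma imE_iff: "G \<in> imE n \<longleftrightarrow> (\<exists>F\<in>wh_faces n. \<exists>i\<in>{2..n}. G = mapE n F i)"
  unfolding imE_def domE_def by force

section \<open>The apex of a face\<close>

text \<open>Meaningful only if G has a least member containing a, as every face with some vertex
  containing a has (apex_of_face); otherwise the description is not unique.\<close>

definition apex :: "'a \<Rightarrow> 'a set set \<Rightarrow> 'a set" where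
  "apex a G = (THE M. M \<in> G \<and> a \<in> M \<and> (\<forall>Y\<in>G. a \<in> Y \<longrightarrow> M \<subseteq> Y))"

lemma apex_eqI:
  assumes "M \<in> G" "a \<in> M" "\<And>Y. Y \<in> G \<Longrightarrow> a \<in> Y \<Longrightarrow> M \<subseteq> Y"
  shows "apex a G = M"
  unfolding apex_def using assms by (intro the_equality) auto

lemma apex_insert_avoiding: "a \<notin> X \<Longrightarrow> apex a (insert X G) = apex a G"
  unfolding apex_def by (rule arg_cong[where f = The]) auto

lemma apex_of_face:
  assumes G: "G \<in> wh_faces m" and "Y \<in> G" "a \<in> Y"
  shows "apex a G \<in> G" "a \<in> apex a G" "\<And>Y. Y \<in> G \<Longrightarrow> a \<in> Y \<Longrightarrow> apex a G \<subseteq> Y"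
proof -
  obtain M where M: "M \<in> G" "a \<in> M"
    and least_card: "\<forall>Y. Y \<in> G \<and> a \<in> Y \<longrightarrow> card M \<le> card Y"
    using ex_has_least_nat[of "\<lambda>Y. Y \<in> G \<and> a \<in> Y" Y card] assms(2,3) by blast
  have least: "M \<subseteq> Y" if Y: "Y \<in> G" "a \<in> Y" for Y
  proof -
    have "finite M"
      using wh_verticesD(2)[OF wh_facesD(1)[OF G M(1)]] .
    then have "\<not> Y \<subset> M"
      using psubset_card_mono[of M Y] least_card Y by (meson leD)
    then show ?thesis
      using wh_facesD(2)[OF G M(1) Y(1)] M(2) Y(2) unfolding wh_compatible_def by blast
  qed
  have "apex a G = M"
    using apex_eqI[OF M least] .
  with M least show "apex a G \<in> G" "a \<in> apex a G" "\<And>Y. Y \<in> G \<Longrightarrow> a \<in> Y \<Longrightarrow> apex a G \<subseteq> Y"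
    by auto
qed

lemma insert_Suc_in_mapC: "S \<in> F \<Longrightarrow> insert (n+1) S \<in> mapC n F S"
  unfolding mapC_eq_lift_image lift_def by force

lemma apex_mapC:
  assumes F: "F \<in> wh_faces n" and S: "S \<in> F"
  shows "apex (n+1) (mapC n F S) = insert (n+1) S"
proof (rule apex_eqI)
  show "insert (n+1) S \<in> mapC n F S"
    using insert_Suc_in_mapC[OF S] .
  fix Y assume "Y \<in> mapC n F S" "n+1 \<in> Y"
  then show "insert (n+1) S \<subseteq> Y"
    using Suc_notin_face_vertex[OF F] unfolding mapC_eq_lift_image lift_def by auto
qed simp

lemma apex_mapD:
  assumes F: "F \<in> wh_faces n" and S: "S \<in> F"
  shows "apex (n+1) (mapD n F S) = insert (n+1) S"
  unfolding mapD_def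
  using apex_insert_avoiding[OF Suc_notin_face_vertex[OF F S]] apex_mapC[OF F S] by simp

lemma apex_mapE:
  assumes F: "F \<in> wh_faces n"
  shows "apex (n+1) (mapE n F i) = {i, n+1}"
proof (rule apex_eqI)
  fix Y assume "Y \<in> mapE n F i" "n+1 \<in> Y"
  then show "{i, n+1} \<subseteq> Y"
    using Suc_notin_face_vertex[OF F]
    unfolding mapE_eq_insert_mapC mapC_eq_lift_image lift_def by auto
qed (simp_all add: mapE_def)

section \<open>Injectivity and disjointness\<close>

lemma edge_notin_mapC:
  assumes F: "F \<in> wh_faces n"
  shows "{j, n+1} \<notin> mapC n F S"
proof
  assume "{j, n+1} \<in> mapC n F S"
  then obtain T where T: "T \<in> F" "{j, n+1} = lift (n+1) S T"
    unfolding mapC_eq_lift_image by blast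
  with Suc_notin_face_vertex[OF F] have "T \<subseteq> {j}"
    unfolding lift_def by (auto split: if_splits)
  then have "card T \<le> 1"
    using card_mono[of "{j}" T] by simp
  with wh_verticesD(3)[OF wh_facesD(1)[OF F T(1)]] show False
    by simp
qed

lemma insert_Suc_neq_edge:
  assumes "S \<in> wh_vertices n"
  shows "insert (n+1) S \<noteq> {i, n+1}"
proof
  assume "insert (n+1) S = {i, n+1}"
  moreover have "n+1 \<notin> S"
    using wh_verticesD(1)[OF assms] by auto
  ultimately have "S \<subseteq> {i}"
    by blast
  then show False
    using card_mono[of "{i}" S] wh_verticesD(3)[OF assms] by simp
qed

lemma mapC_subset_iff:
  assumes F1: "F1 \<in> wh_faces n" and F2: "F2 \<in> wh_faces n"
  shows "mapC n F1 S \<subseteq> mapC n F2 S \<longleftrightarrow> F1 \<subseteq> F2"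
  unfolding mapC_eq_lift_image
proof
  assume sub: "lift (n+1) S ` F1 \<subseteq> lift (n+1) S ` F2"
  show "F1 \<subseteq> F2"
  proof
    fix T assume "T \<in> F1"
    then have "lift (n+1) S T \<in> lift (n+1) S ` F2" "n+1 \<notin> T"
      using sub Suc_notin_face_vertex[OF F1] by auto
    moreover have "F2 \<subseteq> {T. n+1 \<notin> T}"
      using Suc_notin_face_vertex[OF F2] by auto
    ultimately show "T \<in> F2"
      by (simp add: inj_on_image_mem_iff[OF inj_on_lift])
  qed
qed (rule image_mono)

lemma mapE_subset_iff:
  assumes "F1 \<in> wh_faces n" "F2 \<in> wh_faces n"
  shows "mapE n F1 i \<subseteq> mapE n F2 i \<longleftrightarrow> F1 \<subseteq> F2"
  using subset_insert[OF edge_notin_mapC[OF assms(1)]] mapC_subset_iff[OF assms]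
  unfolding mapE_eq_insert_mapC insert_subset by simp

lemma mapC_eq_mapC_iff:
  assumes "F1 \<in> wh_faces n" "S1 \<in> F1" "F2 \<in> wh_faces n" "S2 \<in> F2"
  shows "mapC n F1 S1 = mapC n F2 S2 \<longleftrightarrow> F1 = F2 \<and> S1 = S2"
proof
  assume eq: "mapC n F1 S1 = mapC n F2 S2"
  then have "insert (n+1) S1 = insert (n+1) S2"
    using apex_mapC assms by metis
  then have "S1 = S2"
    using Suc_notin_face_vertex assms by (metis insert_ident)
  with eq show "F1 = F2 \<and> S1 = S2"
    using mapC_subset_iff assms by blast
qed simp

lemma mapD_eq_mapD_iff:
  assumes "F1 \<in> wh_faces n" "S1 \<in> F1" "F2 \<in> wh_faces n" "S2 \<in> F2"
  shows "mapD n F1 S1 = mapD n F2 S2 \<longleftrightarrow> F1 = F2 \<and> S1 = S2"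
proof
  assume eq: "mapD n F1 S1 = mapD n F2 S2"
  then have "insert (n+1) S1 = insert (n+1) S2"
    using apex_mapD assms by metis
  then have S: "S1 = S2"
    using Suc_notin_face_vertex assms by (metis insert_ident)
  have "S1 \<notin> mapC n F1 S1" "S1 \<notin> mapC n F2 S1"
    using notin_lift_image Suc_notin_face_vertex assms unfolding mapC_eq_lift_image by metis+
  with eq S have "mapC n F1 S1 = mapC n F2 S1"
    unfolding mapD_def by (metis insert_ident)
  with S show "F1 = F2 \<and> S1 = S2"
    using mapC_eq_mapC_iff assms by blast
qed simp

lemma mapE_eq_mapE_iff:
  assumes "F1 \<in> wh_faces n" "i1 \<in> {2..n}" "F2 \<in> wh_faces n" "i2 \<in> {2..n}"
  shows "mapE n F1 i1 = mapE n F2 i2 \<longleftrightarrow> F1 = F2 \<and> i1 = i2"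
proof
  assume eq: "mapE n F1 i1 = mapE n F2 i2"
  then have "{i1, n+1} = {i2, n+1}"
    using apex_mapE assms by metis
  then have "i1 = i2"
    using assms(2,4) by (auto simp: doubleton_eq_iff)
  with eq show "F1 = F2 \<and> i1 = i2"
    using mapE_subset_iff assms by blast
qed simp

lemma inj_on_mapA: "inj_on mapA (wh_faces n)"
  by (rule inj_onI) (simp add: mapA_def)

lemma inj_on_mapB: "inj_on (mapB n) (wh_faces n)"
proof (rule inj_onI)
  fix F1 F2 assume "F1 \<in> wh_faces n" "F2 \<in> wh_faces n" "mapB n F1 = mapB n F2"
  then show "F1 = F2"
    using wh_facesD(1) interval_notin_wh_vertices unfolding mapB_def by (metis insert_ident)
qed

lemma inj_on_mapC: "inj_on (\<lambda>(F, S). mapC n F S) (domCD n)"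
  by (auto simp: inj_on_def domCD_def mapC_eq_mapC_iff)

lemma inj_on_mapD: "inj_on (\<lambda>(F, S). mapD n F S) (domCD n)"
  by (auto simp: inj_on_def domCD_def mapD_eq_mapD_iff)

lemma inj_on_mapE: "inj_on (\<lambda>(F, i). mapE n F i) (domE n)"
  by (auto simp: inj_on_def domE_def mapE_eq_mapE_iff)

lemma mapC_neq_mapD:
  assumes "F1 \<in> wh_faces n" "S1 \<in> F1" "F2 \<in> wh_faces n" "S2 \<in> F2"
  shows "mapC n F1 S1 \<noteq> mapD n F2 S2"
proof
  assume eq: "mapC n F1 S1 = mapD n F2 S2"
  then have "insert (n+1) S1 = insert (n+1) S2"
    using apex_mapC apex_mapD assms by metis
  then have "S1 = S2"
    using Suc_notin_face_vertex assms by (metis insert_ident)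
  moreover have "S1 \<notin> mapC n F1 S1"
    using notin_lift_image Suc_notin_face_vertex assms unfolding mapC_eq_lift_image by metis
  ultimately show False
    using eq by (simp add: mapD_def)
qed

lemma mapC_neq_mapE:
  assumes "F1 \<in> wh_faces n" "S \<in> F1" "F2 \<in> wh_faces n"
  shows "mapC n F1 S \<noteq> mapE n F2 i"
  using apex_mapC apex_mapE insert_Suc_neq_edge wh_facesD(1) assms by metis

lemma mapD_neq_mapE:
  assumes "F1 \<in> wh_faces n" "S \<in> F1" "F2 \<in> wh_faces n"
  shows "mapD n F1 S \<noteq> mapE n F2 i"
  using apex_mapD apex_mapE insert_Suc_neq_edge wh_facesD(1) assms by metis

lemma images_disjoint:
  "imA n \<inter> imB n = {}" "imA n \<inter> imC n = {}" "imA n \<inter> imD n = {}" "imA n \<inter> imE n = {}"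
  "imB n \<inter> imC n = {}" "imB n \<inter> imD n = {}" "imB n \<inter> imE n = {}"
  "imC n \<inter> imD n = {}" "imC n \<inter> imE n = {}" "imD n \<inter> imE n = {}"
proof -
  have avoiding: "\<forall>Y\<in>G. n+1 \<notin> Y" if "G \<in> imA n \<union> imB n" for G
    using that Suc_notin_face_vertex by (auto simp: imA_eq imB_def mapB_def)
  have through: "\<exists>Y\<in>G. n+1 \<in> Y" if "G \<in> imC n \<union> imD n \<union> imE n" for G
    using that insert_Suc_in_mapC by (auto simp: imC_iff imD_iff imE_iff mapD_def mapE_def)
  have "{2..n} \<in> G" if "G \<in> imB n" for G
    using that by (auto simp: imB_def mapB_def)
  then show "imA n \<inter> imB n = {}"
    using wh_facesD(1) interval_notin_wh_vertices by (fastforce simp: imA_eq)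
  from avoiding through show "imA n \<inter> imC n = {}" "imA n \<inter> imD n = {}" "imA n \<inter> imE n = {}"
    "imB n \<inter> imC n = {}" "imB n \<inter> imD n = {}" "imB n \<inter> imE n = {}"
    by blast+
  show "imC n \<inter> imD n = {}"
    using mapC_neq_mapD by (fastforce simp: imC_iff imD_iff)
  show "imC n \<inter> imE n = {}"
    using mapC_neq_mapE by (fastforce simp: imC_iff imE_iff)
  show "imD n \<inter> imE n = {}"
    using mapD_neq_mapE by (fastforce simp: imD_iff imE_iff)
qed

section \<open>Every face of the larger complex is an image\<close>

lemma lift_Diff_Suc_eq:
  assumes G: "G \<in> wh_faces (n+1)" and M: "M \<in> G" "n+1 \<in> M"
    and least: "\<And>Y. Y \<in> G \<Longrightarrow> n+1 \<in> Y \<Longrightarrow> M \<subseteq> Y"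
    and Y: "Y \<in> G" "Y \<noteq> M - {n+1}"
  shows "lift (n+1) (M - {n+1}) (Y - {n+1}) = Y"
proof (cases "n+1 \<in> Y")
  case True
  then have "M - {n+1} \<subseteq> Y - {n+1}"
    using least[OF Y(1)] by blast
  with True show ?thesis
    by (auto simp: lift_def)
next
  case False
  have "M \<noteq> {n+1}"
    using wh_verticesD(3)[OF wh_facesD(1)[OF G M(1)]] by auto
  with wh_facesD(2)[OF G Y(1) M(1)] False Y(2) M(2) have "\<not> M - {n+1} \<subseteq> Y"
    unfolding wh_compatible_def by blast
  with False show ?thesis
    by (simp add: lift_def)
qed

text \<open>The right-hand side is G without the extra vertex of D(F,S), resp. E(F,i); deleting n+1
  from its vertices inverts lift.\<close>

lemma wh_faces_Suc_decomposition:
  assumes G: "G \<in> wh_faces (n+1)" and M: "M \<in> G" "n+1 \<in> M"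
    and least: "\<And>Y. Y \<in> G \<Longrightarrow> n+1 \<in> Y \<Longrightarrow> M \<subseteq> Y"
  shows "\<exists>F\<in>wh_faces n. mapC n F (M - {n+1}) = {Y \<in> G. Y \<noteq> M - {n+1} \<and> 2 \<le> card (Y - {n+1})}"
proof -
  define S where "S = M - {n+1}"
  define G' where "G' = {Y \<in> G. Y \<noteq> S \<and> 2 \<le> card (Y - {n+1})}"
  have lift_Diff_eq: "lift (n+1) S (Y - {n+1}) = Y" if "Y \<in> G'" for Y
    using lift_Diff_Suc_eq[OF G M least] that unfolding G'_def S_def by blast
  have "(\<lambda>Y. Y - {n+1}) ` G' \<in> wh_faces n"
    unfolding wh_faces_def
  proof (intro CollectI conjI subsetI ballI)
    fix T assume "T \<in> (\<lambda>Y. Y - {n+1}) ` G'"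
    then obtain Y where Y: "Y \<in> G'" "T = Y - {n+1}"
      by blast
    have YV: "Y \<in> wh_vertices (n+1)"
      using Y(1) wh_facesD(1)[OF G] unfolding G'_def by blast
    show "T \<in> wh_vertices n"
    proof (cases "n+1 \<in> Y")
      case True
      then show ?thesis
        using wh_vertices_Suc_Diff[OF YV] Y unfolding G'_def by blast
    next
      case False
      then have "\<not> S \<subseteq> Y"
        using lift_Diff_eq[OF Y(1)] by (auto simp: lift_def)
      moreover have "S \<subseteq> {2..n}"
        using wh_verticesD(1)[OF wh_facesD(1)[OF G M(1)]] unfolding S_def by (auto simp: le_Suc_eq)
      ultimately have "Y \<noteq> {2..n}"
        by blast
      with False Y show ?thesis
        using wh_vertices_Suc_avoiding[OF YV] by simp
    qed
  next
    fix T U assume "T \<in> (\<lambda>Y. Y - {n+1}) ` G'" "U \<in> (\<lambda>Y. Y - {n+1}) ` G'"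
    then show "wh_compatible T U"
      using wh_compatible_Diff wh_facesD(2)[OF G] unfolding G'_def by blast
  qed
  moreover have "mapC n ((\<lambda>Y. Y - {n+1}) ` G') S = G'"
  proof -
    have "(\<lambda>Y. lift (n+1) S (Y - {n+1})) ` G' = (\<lambda>Y. Y) ` G'"
      by (rule image_cong[OF refl lift_Diff_eq])
    then show ?thesis
      unfolding mapC_eq_lift_image image_image by simp
  qed
  ultimately show ?thesis
    unfolding S_def G'_def by blast
qed

lemma face_avoiding_Suc_in_imA_or_imB:
  assumes G: "G \<in> wh_faces (n+1)" and avoid: "\<forall>Y\<in>G. n+1 \<notin> Y"
  shows "G \<in> imA n \<union> imB n"
proof -
  have F: "G - {{2..n}} \<in> wh_faces n"
    using wh_vertices_Suc_avoiding wh_facesD[OF G] avoid unfolding wh_faces_def by blast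
  show ?thesis
  proof (cases "{2..n} \<in> G")
    case True
    then have "G = mapB n (G - {{2..n}})"
      unfolding mapB_def by blast
    then have "G \<in> imB n"
      using F unfolding imB_def by (rule image_eqI)
    then show ?thesis
      by blast
  next
    case False
    with F show ?thesis
      unfolding imA_eq by simp
  qed
qed

lemma face_with_edge_eq_mapE:
  assumes G: "G \<in> wh_faces (n+1)" and edge: "{i, n+1} \<in> G"
  shows "\<exists>F\<in>wh_faces n. G = mapE n F i"
proof -
  let ?M = "{i, n+1}"
  have i: "i \<in> {2..n}"
    using edge_in_wh_vertices_Suc wh_facesD(1)[OF G edge] .
  have least: "?M \<subseteq> Y" if Y: "Y \<in> G" "n+1 \<in> Y" for Y
  proof -
    have "Y \<noteq> {n+1}"
      using wh_verticesD(3)[OF wh_facesD(1)[OF G Y(1)]] by auto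
    with Y(2) have "\<not> Y \<subset> ?M"
      by blast
    with wh_facesD(2)[OF G edge Y(1)] Y(2) show ?thesis
      unfolding wh_compatible_def by blast
  qed
  have "?M - {n+1} = {i}"
    using i by auto
  with wh_faces_Suc_decomposition[OF G edge _ least]
  obtain F where F: "F \<in> wh_faces n"
    and C: "mapC n F {i} = {Y \<in> G. Y \<noteq> {i} \<and> 2 \<le> card (Y - {n+1})}"
    by auto
  have "2 \<le> card (Y - {n+1})" if Y: "Y \<in> G" "Y \<noteq> ?M" for Y
  proof (rule two_le_card_Diff_Suc[OF wh_facesD(1)[OF G Y(1)]])
    assume "n+1 \<in> Y"
    with least Y have "?M \<subset> Y"
      by blast
    then have "card ?M < card Y"
      using psubset_card_mono wh_verticesD(2)[OF wh_facesD(1)[OF G Y(1)]] by blast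
    with i show "3 \<le> card Y"
      by simp
  qed
  moreover have "{i} \<notin> G" "card ({i, n+1} - {n+1}) = 1"
    using wh_verticesD(3)[OF wh_facesD(1)[OF G]] i by fastforce+
  ultimately have "mapC n F {i} = G - {?M}"
    unfolding C by auto
  with edge have "G = mapE n F i"
    unfolding mapE_eq_insert_mapC by blast
  with F show ?thesis
    by blast
qed

lemma face_without_edge_in_imC_or_imD:
  assumes G: "G \<in> wh_faces (n+1)" and Y: "Y \<in> G" "n+1 \<in> Y"
    and no_edge: "\<forall>i. {i, n+1} \<notin> G"
  shows "G \<in> imC n \<union> imD n"
proof -
  define M where "M = apex (n+1) G"
  have M: "M \<in> G" "n+1 \<in> M" and least: "\<And>Y. Y \<in> G \<Longrightarrow> n+1 \<in> Y \<Longrightarrow> M \<subseteq> Y"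
    using apex_of_face[OF G Y] unfolding M_def by auto
  define S where "S = M - {n+1}"
  have "3 \<le> card M"
  proof (rule ccontr)
    assume "\<not> 3 \<le> card M"
    with wh_verticesD(3)[OF wh_facesD(1)[OF G M(1)]] have "card M = 2"
      by simp
    with M(2) obtain i where "M = {i, n+1}"
      by (auto simp: card_2_iff)
    with M(1) no_edge show False
      by blast
  qed
  have big: "2 \<le> card (Y - {n+1})" if "Y \<in> G" for Y
  proof (rule two_le_card_Diff_Suc[OF wh_facesD(1)[OF G that]])
    assume "n+1 \<in> Y"
    with \<open>3 \<le> card M\<close> show "3 \<le> card Y"
      using card_mono[OF wh_verticesD(2)[OF wh_facesD(1)[OF G that]] least[OF that]] by simp
  qed
  from big have "{Y \<in> G. Y \<noteq> S \<and> 2 \<le> card (Y - {n+1})} = G - {S}"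
    by blast
  with wh_faces_Suc_decomposition[OF G M least, folded S_def]
  obtain F where F: "F \<in> wh_faces n" and C: "mapC n F S = G - {S}"
    by auto
  have "n+1 \<notin> S" "M = insert (n+1) S"
    using M(2) unfolding S_def by auto
  with C M(1) have "insert (n+1) S \<in> lift (n+1) S ` F"
    unfolding mapC_eq_lift_image by auto
  then have "S \<in> F"
    using insert_in_lift_image_iff[OF \<open>n+1 \<notin> S\<close>] Suc_notin_face_vertex[OF F] by blast
  show ?thesis
  proof (cases "S \<in> G")
    case True
    with C have "G = mapD n F S"
      unfolding mapD_def by blast
    with F \<open>S \<in> F\<close> show ?thesis
      unfolding Un_iff imD_iff by blast
  next
    case False
    with C have "G = mapC n F S"
      by blast
    with F \<open>S \<in> F\<close> show ?thesis
      unfolding Un_iff imC_iff by blast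
  qed
qed

lemma wh_faces_Suc_eq_images:
  assumes "3 \<le> n"
  shows "wh_faces (n+1) = imA n \<union> imB n \<union> imC n \<union> imD n \<union> imE n"
proof
  have "mapC n F S \<in> wh_faces (n+1)" if F: "F \<in> wh_faces n" and S: "S \<in> F" for F S
    using mapC_in_wh_faces[OF F wh_vertices_nonempty[OF wh_facesD(1)[OF F S]]] .
  then show "imA n \<union> imB n \<union> imC n \<union> imD n \<union> imE n \<subseteq> wh_faces (n+1)"
    using wh_faces_subset_Suc mapB_in_wh_faces[OF assms] mapD_in_wh_faces mapE_in_wh_faces[OF assms]
    by (auto simp: imA_eq imB_def imC_iff imD_iff imE_iff)
next
  show "wh_faces (n+1) \<subseteq> imA n \<union> imB n \<union> imC n \<union> imD n \<union> imE n"
  proof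
    fix G assume G: "G \<in> wh_faces (n+1)"
    consider (edge) i where "{i, n+1} \<in> G"
      | (no_edge) Y where "Y \<in> G" "n+1 \<in> Y" "\<forall>i. {i, n+1} \<notin> G"
      | (avoiding) "\<forall>Y\<in>G. n+1 \<notin> Y"
      by blast
    then show "G \<in> imA n \<union> imB n \<union> imC n \<union> imD n \<union> imE n"
    proof cases
      case edge
      then show ?thesis
        using face_with_edge_eq_mapE[OF G] edge_in_wh_vertices_Suc wh_facesD(1)[OF G]
        unfolding Un_iff imE_iff by blast
    next
      case no_edge
      then show ?thesis
        using face_without_edge_in_imC_or_imD[OF G] by blast
    next
      case avoiding
      then show ?thesis
        using face_avoiding_Suc_in_imA_or_imB[OF G] by blast
    qed
  qed
qed

lemma mapE_image_eq:
  assumes "3 \<le> n" "i \<in> {2..n}"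
  shows "(\<lambda>F. mapE n F i) ` wh_faces n = {G \<in> wh_faces (n+1). {i, n+1} \<in> G}"
proof (intro equalityI subsetI)
  fix G assume "G \<in> (\<lambda>F. mapE n F i) ` wh_faces n"
  then show "G \<in> {G \<in> wh_faces (n+1). {i, n+1} \<in> G}"
    using mapE_in_wh_faces[OF assms(1) _ assms(2)] by (auto simp: mapE_def)
next
  fix G assume "G \<in> {G \<in> wh_faces (n+1). {i, n+1} \<in> G}"
  then show "G \<in> (\<lambda>F. mapE n F i) ` wh_faces n"
    using face_with_edge_eq_mapE by blast
qed

lemma mapE_image_upward_closed:
  assumes "3 \<le> n" "i \<in> {2..n}"
    and "G \<in> (\<lambda>F. mapE n F i) ` wh_faces n" "H \<in> wh_faces (n+1)" "G \<subseteq> H"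
  shows "H \<in> (\<lambda>F. mapE n F i) ` wh_faces n"
  using assms(3-) unfolding mapE_image_eq[OF assms(1,2)] by blast

lemma wh_faces_order_iso_mapE_image:
  assumes "i \<in> {2..n}"
  shows "\<exists>f. bij_betw f (wh_faces n) ((\<lambda>F. mapE n F i) ` wh_faces n) \<and>
           (\<forall>F\<in>wh_faces n. \<forall>G\<in>wh_faces n. F \<subseteq> G \<longleftrightarrow> f F \<subseteq> f G)"
proof -
  have "inj_on (\<lambda>F. mapE n F i) (wh_faces n)"
    using mapE_eq_mapE_iff assms by (auto simp: inj_on_def)
  then have "bij_betw (\<lambda>F. mapE n F i) (wh_faces n) ((\<lambda>F. mapE n F i) ` wh_faces n)"
    by (rule inj_on_imp_bij_betw)
  moreover have "\<forall>F\<in>wh_faces n. \<forall>G\<in>wh_faces n. F \<subseteq> G \<longleftrightarrow> mapE n F i \<subseteq> mapE n G i"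
    using mapE_subset_iff by blast
  ultimately show ?thesis
    by blast
qed

theorem mainTheorem4:
  fixes n :: nat
  assumes "n \<ge> 3"
  shows
    "inj_on mapA (wh_faces n) \<and>
     inj_on (mapB n) (wh_faces n) \<and>
     inj_on (\<lambda>(F, S). mapC n F S) (domCD n) \<and>
     inj_on (\<lambda>(F, S). mapD n F S) (domCD n) \<and>
     inj_on (\<lambda>(F, i). mapE n F i) (domE n) \<and>
     imA n \<subseteq> wh_faces (n+1) \<and> imB n \<subseteq> wh_faces (n+1) \<and> imC n \<subseteq> wh_faces (n+1) \<and>
     imD n \<subseteq> wh_faces (n+1) \<and> imE n \<subseteq> wh_faces (n+1) \<and>
     wh_faces (n+1) = imA n \<union> imB n \<union> imC n \<union> imD n \<union> imE n \<and>
     imA n \<inter> imB n = {} \<and> imA n \<inter> imC n = {} \<and> imA n \<inter> imD n = {} \<and> imA n \<inter> imE n = {} \<and>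
     imB n \<inter> imC n = {} \<and> imB n \<inter> imD n = {} \<and> imB n \<inter> imE n = {} \<and>
     imC n \<inter> imD n = {} \<and> imC n \<inter> imE n = {} \<and>
     imD n \<inter> imE n = {} \<and>
     (\<forall>i\<in>{2..n}.
        (\<lambda>F. mapE n F i) ` wh_faces n = {G \<in> wh_faces (n+1). {i, n+1} \<in> G} \<and>
        (\<exists>f. bij_betw f (wh_faces n) ((\<lambda>F. mapE n F i) ` wh_faces n) \<and>
             (\<forall>F\<in>wh_faces n. \<forall>G\<in>wh_faces n. F \<subseteq> G \<longleftrightarrow> f F \<subseteq> f G)) \<and>
        (\<forall>G\<in>(\<lambda>F. mapE n F i) ` wh_faces n. \<forall>H\<in>wh_faces (n+1).
             G \<subseteq> H \<longrightarrow> H \<in> (\<lambda>F. mapE n F i) ` wh_faces n))"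
proof -
  have faces: "wh_faces (n+1) = imA n \<union> imB n \<union> imC n \<union> imD n \<union> imE n"
    using wh_faces_Suc_eq_images[OF assms] .
  have subsets: "imA n \<subseteq> wh_faces (n+1)" "imB n \<subseteq> wh_faces (n+1)"
    "imC n \<subseteq> wh_faces (n+1)" "imD n \<subseteq> wh_faces (n+1)" "imE n \<subseteq> wh_faces (n+1)"
    unfolding faces by auto
  show ?thesis
    by (intro conjI ballI impI)
      (fact inj_on_mapA inj_on_mapB inj_on_mapC inj_on_mapD inj_on_mapE faces subsets
        images_disjoint mapE_image_eq[OF assms] wh_faces_order_iso_mapE_image
        mapE_image_upward_closed[OF assms])+
qed

end
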